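(* Let $I$ be a semigroup (or a monoid). Let $S$ be a set and for each $s\in S$ let $(B_s,\beta(s))$ be a semi-invertible $I$-set. Let $B=\prod_{s\in S}B_s$ with the $I$-action given by $\beta(s)$ on the $s$-th component. Let $(A,\alpha)$ and $(C,\gamma)$ be $I$-sets and let $f:A\to B$ and $g:B\to C$ be $I$-equivariant functions. Then $g\circ f:A\to C$ is $I$-equivariant.
   Context: For a set $X$, $\mathrm{End}_l(X)$ denotes self-maps of $X$ written on the left with product $f\circ g$ ($g$ first); $\mathrm{End}_r(X)$ denotes self-maps written on the right, $x\mapsto(x)f$, with $(x)(fg)=((x)f)g$. An $I$-set is a set $X$ with a pair $\xi=(\xi_l,\xi_r)$ of semigroup (resp. monoid) homomorphisms $\xi_l:I\to\mathrm{End}_l(X)$, $\xi_r:I\to\mathrm{End}_r(X)$ with $(\xi_l(i)(x))\xi_r(j)=\xi_l(i)((x)\xi_r(j))$ for all $i,j,x$. A function $f:X\to Y$ between $I$-sets $(X,\xi)$, $(Y,\eta)$ is $I$-equivariant if $(f(\xi_l(i)(x)))\eta_r(i)=\eta_l(i)(f((x)\xi_r(i)))$ for all $i\in I$, $x\in X$. An $I$-set $(X,\xi)$ is semi-invertible if for every $i\in I$, at least one of $\xi_l(i)$, $\xi_r(i)$ is a bijection of $X$. The product action on $\prod_s B_s$ is componentwise: $\beta_l(i)((b_s)_s)=(\beta(s)_l(i)(b_s))_s$ and $((b_s)_s)\beta_r(i)=((b_s)\beta(s)_r(i))_s$. *)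

theory Defs
  imports "HOL-Library.FuncSet"
begin

text \<open>An I-set on carrier X: xl i is the left action (End_l, composition g first),
 xr i is the right action (End_r, x(fg) = ((x)f)g), both map X into X,
 are semigroup homomorphisms, and commute.\<close>
definition Iset :: "'x set \<Rightarrow> ('i::semigroup_mult \<Rightarrow> 'x \<Rightarrow> 'x) \<Rightarrow> ('i \<Rightarrow> 'x \<Rightarrow> 'x) \<Rightarrow> bool" where
  "Iset X xl xr \<longleftrightarrow>
     (\<forall>i. \<forall>x\<in>X. xl i x \<in> X) \<and> (\<forall>i. \<forall>x\<in>X. xr i x \<in> X) \<and>
     (\<forall>i j. \<forall>x\<in>X. xl (i * j) x = xl i (xl j x)) \<and>
     (\<forall>i j. \<forall>x\<in>X. xr (i * j) x = xr j (xr i x)) \<and>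
     (\<forall>i j. \<forall>x\<in>X. xr j (xl i x) = xl i (xr j x))"

definition semi_invertible :: "'x set \<Rightarrow> ('i \<Rightarrow> 'x \<Rightarrow> 'x) \<Rightarrow> ('i \<Rightarrow> 'x \<Rightarrow> 'x) \<Rightarrow> bool" where
  "semi_invertible X xl xr \<longleftrightarrow> (\<forall>i. bij_betw (xl i) X X \<or> bij_betw (xr i) X X)"

definition equivariant :: "'x set \<Rightarrow> ('i \<Rightarrow> 'x \<Rightarrow> 'x) \<Rightarrow> ('i \<Rightarrow> 'x \<Rightarrow> 'x) \<Rightarrow>
    'y set \<Rightarrow> ('i \<Rightarrow> 'y \<Rightarrow> 'y) \<Rightarrow> ('i \<Rightarrow> 'y \<Rightarrow> 'y) \<Rightarrow> ('x \<Rightarrow> 'y) \<Rightarrow> bool" where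
  "equivariant X xl xr Y yl yr f \<longleftrightarrow>
     (\<forall>x\<in>X. f x \<in> Y) \<and>
     (\<forall>i. \<forall>x\<in>X. yr i (f (xl i x)) = yl i (f (xr i x)))"

definition prod_act :: "'s set \<Rightarrow> ('s \<Rightarrow> 'i \<Rightarrow> 'b \<Rightarrow> 'b) \<Rightarrow> 'i \<Rightarrow> ('s \<Rightarrow> 'b) \<Rightarrow> ('s \<Rightarrow> 'b)" where
  "prod_act S act i b = (\<lambda>s\<in>S. act s i (b s))"

end

theory Submission
  imports Defs
begin

text \<open>Composition can fail only because equivariance of g must be applied at an element of B
 whose left and right translates are the two values f(i x) and f(x i) prescribed by f.
 Such an element exists whenever the middle I-set lets every pair (u, v) with u i = i v be
 written as (i w, w i). A semi-invertible I-set has this property: if left translation by i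
 is bijective take w with i w = u, and then i (w i) = (i w) i = u i = i v forces w i = v;
 the right-bijective case is symmetric. The property is inherited componentwise by products.\<close>

definition lifts_commuting_pairs :: "'x set \<Rightarrow> ('i \<Rightarrow> 'x \<Rightarrow> 'x) \<Rightarrow> ('i \<Rightarrow> 'x \<Rightarrow> 'x) \<Rightarrow> bool" where
  "lifts_commuting_pairs X xl xr \<longleftrightarrow>
     (\<forall>i. \<forall>u\<in>X. \<forall>v\<in>X. xr i u = xl i v \<longrightarrow> (\<exists>w\<in>X. xl i w = u \<and> xr i w = v))"

lemma semi_invertible_lifts_commuting_pairs:
  assumes "Iset X xl xr" and "semi_invertible X xl xr"
  shows "lifts_commuting_pairs X xl xr"
  unfolding lifts_commuting_pairs_def
proof (intro allI ballI impI)
  fix i u v assume u: "u \<in> X" and v: "v \<in> X" and uv: "xr i u = xl i v"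
  have closed: "\<forall>x\<in>X. xl i x \<in> X" "\<forall>x\<in>X. xr i x \<in> X"
    and comm: "\<forall>x\<in>X. xr i (xl i x) = xl i (xr i x)"
    using assms(1) unfolding Iset_def by auto
  from assms(2) consider "bij_betw (xl i) X X" | "bij_betw (xr i) X X"
    unfolding semi_invertible_def by blast
  then show "\<exists>w\<in>X. xl i w = u \<and> xr i w = v"
  proof cases
    case 1
    then obtain w where w: "w \<in> X" "xl i w = u"
      using u by (metis bij_betw_imp_surj_on imageE)
    have "xl i (xr i w) = xl i v" using comm w uv by metis
    then have "xr i w = v"
      using 1 closed w v by (metis bij_betw_imp_inj_on inj_on_def)
    with w show ?thesis by blast
  next
    case 2
    then obtain w where w: "w \<in> X" "xr i w = v"
      using v by (metis bij_betw_imp_surj_on imageE)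
    have "xr i (xl i w) = xr i u" using comm w uv by metis
    then have "xl i w = u"
      using 2 closed w u by (metis bij_betw_imp_inj_on inj_on_def)
    with w show ?thesis by blast
  qed
qed

lemma lifts_commuting_pairs_PiE:
  assumes "\<forall>s\<in>S. lifts_commuting_pairs (B s) (bl s) (br s)"
  shows "lifts_commuting_pairs (PiE S B) (prod_act S bl) (prod_act S br)"
  unfolding lifts_commuting_pairs_def
proof (intro allI ballI impI)
  fix i u v assume u: "u \<in> PiE S B" and v: "v \<in> PiE S B"
    and uv: "prod_act S br i u = prod_act S bl i v"
  have "\<forall>s\<in>S. \<exists>w\<in>B s. bl s i w = u s \<and> br s i w = v s"
  proof
    fix s assume s: "s \<in> S"
    have "br s i (u s) = bl s i (v s)"
      using fun_cong[OF uv, of s] s unfolding prod_act_def by simp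
    then show "\<exists>w\<in>B s. bl s i w = u s \<and> br s i w = v s"
      using assms s u v unfolding lifts_commuting_pairs_def by (auto simp: PiE_iff)
  qed
  then obtain W where W: "\<forall>s\<in>S. W s \<in> B s \<and> bl s i (W s) = u s \<and> br s i (W s) = v s"
    by metis
  have "restrict W S \<in> PiE S B" using W by auto
  moreover have "prod_act S bl i (restrict W S) = u" "prod_act S br i (restrict W S) = v"
    using W u v unfolding prod_act_def by (auto simp: PiE_iff extensional_def)
  ultimately show "\<exists>w\<in>PiE S B. prod_act S bl i w = u \<and> prod_act S br i w = v"
    by blast
qed

lemma equivariant_comp:
  assumes "\<forall>i. \<forall>x\<in>A. al i x \<in> A" and "\<forall>i. \<forall>x\<in>A. ar i x \<in> A"
    and "lifts_commuting_pairs B bl br"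
    and f: "equivariant A al ar B bl br f" and g: "equivariant B bl br C cl cr g"
  shows "equivariant A al ar C cl cr (g \<circ> f)"
  unfolding equivariant_def
proof (intro conjI allI ballI)
  fix x assume "x \<in> A"
  then show "(g \<circ> f) x \<in> C" using f g unfolding equivariant_def by auto
next
  fix i x assume x: "x \<in> A"
  have "f (al i x) \<in> B" "f (ar i x) \<in> B"
    using assms(1,2) f x unfolding equivariant_def by auto
  moreover have "br i (f (al i x)) = bl i (f (ar i x))"
    using f x unfolding equivariant_def by auto
  ultimately obtain w where "w \<in> B" "bl i w = f (al i x)" "br i w = f (ar i x)"
    using assms(3) unfolding lifts_commuting_pairs_def by blast
  moreover have "\<forall>w\<in>B. cr i (g (bl i w)) = cl i (g (br i w))"
    using g unfolding equivariant_def by blast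
  ultimately show "cr i ((g \<circ> f) (al i x)) = cl i ((g \<circ> f) (ar i x))"
    by force
qed

theorem mainTheorem4:
  fixes A :: "'a set" and al ar :: "'i::semigroup_mult \<Rightarrow> 'a \<Rightarrow> 'a"
    and C :: "'c set" and cl cr :: "'i \<Rightarrow> 'c \<Rightarrow> 'c"
    and S :: "'s set" and B :: "'s \<Rightarrow> 'b set" and bl br :: "'s \<Rightarrow> 'i \<Rightarrow> 'b \<Rightarrow> 'b"
    and f :: "'a \<Rightarrow> ('s \<Rightarrow> 'b)" and g :: "('s \<Rightarrow> 'b) \<Rightarrow> 'c"
  assumes "Iset A al ar" and "Iset C cl cr"
    and "\<forall>s\<in>S. Iset (B s) (bl s) (br s)"
    and "\<forall>s\<in>S. semi_invertible (B s) (bl s) (br s)"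
    and "equivariant A al ar (PiE S B) (prod_act S bl) (prod_act S br) f"
    and "equivariant (PiE S B) (prod_act S bl) (prod_act S br) C cl cr g"
  shows "equivariant A al ar C cl cr (g \<circ> f)"
proof -
  have "lifts_commuting_pairs (PiE S B) (prod_act S bl) (prod_act S br)"
    using assms(3,4) by (simp add: lifts_commuting_pairs_PiE semi_invertible_lifts_commuting_pairs)
  moreover have "\<forall>i. \<forall>x\<in>A. al i x \<in> A" "\<forall>i. \<forall>x\<in>A. ar i x \<in> A"
    using assms(1) unfolding Iset_def by auto
  ultimately show ?thesis
    using assms(5,6) by (blast intro: equivariant_comp)
qed

end
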